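(* Let $(A,*,\{\cdot,\cdot,\cdot\};\omega)$ be a quadratic pre-Lie-Yamaguti algebra. Then $\omega(\{x,y,z\}_D,w)=-\omega(z,[\![x,y,w]\!]_C)$ for all $x,y,z,w\in A$.
   Context: All vector spaces are over a field of characteristic $0$. A pre-Lie-Yamaguti algebra is a vector space $A$ with a bilinear operation $*$ and a trilinear operation $\{\cdot,\cdot,\cdot\}$ such that, writing $[x,y]_C=x*y-y*x$, $(x,y,z)=(x*y)*z-x*(y*z)$ and $\{x,y,z\}_D=\{z,y,x\}-\{z,x,y\}+(y,x,z)-(x,y,z)$, for all $x,y,z,w,t\in A$: (P1) $\{z,[x,y]_C,w\}-\{y*z,x,w\}+\{x*z,y,w\}=0$; (P2) $\{x,y,[z,w]_C\}=z*\{x,y,w\}-w*\{x,y,z\}$; (P3) $\{\{x,y,z\},w,t\}-\{\{x,y,w\},z,t\}-\{x,y,\{z,w,t\}_D\}-\{x,y,\{z,w,t\}\}+\{x,y,\{w,z,t\}\}+\{z,w,\{x,y,t\}\}_D=0$; (P4) $\{z,\{x,y,w\}_D,t\}+\{z,\{x,y,w\},t\}-\{z,\{y,x,w\},t\}+\{z,w,\{x,y,t\}_D\}+\{z,w,\{x,y,t\}\}-\{z,w,\{y,x,t\}\}=\{x,y,\{z,w,t\}\}_D-\{\{x,y,z\}_D,w,t\}$; (P5) $\{x,y,z\}_D*w+\{x,y,z\}*w-\{y,x,z\}*w=\{x,y,z*w\}_D-z*\{x,y,w\}_D$. Set $[\![x,y,z]\!]_C=\{x,y,z\}_D+\{x,y,z\}-\{y,x,z\}$.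 A quadratic pre-Lie-Yamaguti algebra is a pre-Lie-Yamaguti algebra with a nondegenerate skew-symmetric bilinear form $\omega$ such that $\omega(x*y,z)=-\omega(y,[x,z]_C)$ and $\omega(\{x,y,z\},w)=\omega(x,[\![w,z,y]\!]_C)$ for all $x,y,z,w\in A$. *)

theory Defs
  imports Main "HOL.Vector_Spaces"
begin

definition bilin :: "('k::field \<Rightarrow> 'v::ab_group_add \<Rightarrow> 'v) \<Rightarrow> ('k \<Rightarrow> 'w::ab_group_add \<Rightarrow> 'w)
   \<Rightarrow> ('v \<Rightarrow> 'v \<Rightarrow> 'w) \<Rightarrow> bool" where
  "bilin sc sc' f \<longleftrightarrow> (\<forall>x. Vector_Spaces.linear sc sc' (f x))
                     \<and> (\<forall>y. Vector_Spaces.linear sc sc' (\<lambda>x. f x y))"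

definition trilin :: "('k::field \<Rightarrow> 'v::ab_group_add \<Rightarrow> 'v)
   \<Rightarrow> ('v \<Rightarrow> 'v \<Rightarrow> 'v \<Rightarrow> 'v) \<Rightarrow> bool" where
  "trilin sc f \<longleftrightarrow> (\<forall>y z. Vector_Spaces.linear sc sc (\<lambda>x. f x y z))
                  \<and> (\<forall>x z. Vector_Spaces.linear sc sc (\<lambda>y. f x y z))
                  \<and> (\<forall>x y. Vector_Spaces.linear sc sc (\<lambda>z. f x y z))"

definition commC :: "('v::ab_group_add \<Rightarrow> 'v \<Rightarrow> 'v) \<Rightarrow> 'v \<Rightarrow> 'v \<Rightarrow> 'v" where
  "commC m x y = m x y - m y x"

definition assoc :: "('v::ab_group_add \<Rightarrow> 'v \<Rightarrow> 'v) \<Rightarrow> 'v \<Rightarrow> 'v \<Rightarrow> 'v \<Rightarrow> 'v" where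
  "assoc m x y z = m (m x y) z - m x (m y z)"

definition triD :: "('v::ab_group_add \<Rightarrow> 'v \<Rightarrow> 'v) \<Rightarrow> ('v \<Rightarrow> 'v \<Rightarrow> 'v \<Rightarrow> 'v)
   \<Rightarrow> 'v \<Rightarrow> 'v \<Rightarrow> 'v \<Rightarrow> 'v" where
  "triD m t x y z = t z y x - t z x y + assoc m y x z - assoc m x y z"

definition triC :: "('v::ab_group_add \<Rightarrow> 'v \<Rightarrow> 'v) \<Rightarrow> ('v \<Rightarrow> 'v \<Rightarrow> 'v \<Rightarrow> 'v)
   \<Rightarrow> 'v \<Rightarrow> 'v \<Rightarrow> 'v \<Rightarrow> 'v" where
  "triC m t x y z = triD m t x y z + t x y z - t y x z"

definition pre_LY :: "('k::field_char_0 \<Rightarrow> 'v::ab_group_add \<Rightarrow> 'v)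
   \<Rightarrow> ('v \<Rightarrow> 'v \<Rightarrow> 'v) \<Rightarrow> ('v \<Rightarrow> 'v \<Rightarrow> 'v \<Rightarrow> 'v) \<Rightarrow> bool" where
  "pre_LY sc m t \<longleftrightarrow> vector_space sc \<and> bilin sc sc m \<and> trilin sc t \<and>
    (\<forall>x y z w t'.
      \<comment> \<open>P1\<close>
      t z (commC m x y) w - t (m y z) x w + t (m x z) y w = 0 \<and>
      \<comment> \<open>P2\<close>
      t x y (commC m z w) = m z (t x y w) - m w (t x y z) \<and>
      \<comment> \<open>P3\<close>
      t (t x y z) w t' - t (t x y w) z t' - t x y (triD m t z w t') - t x y (t z w t')
        + t x y (t w z t') + triD m t z w (t x y t') = 0 \<and>
      \<comment> \<open>P4\<close>
      t z (triD m t x y w) t' + t z (t x y w) t' - t z (t y x w) t'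
        + t z w (triD m t x y t') + t z w (t x y t') - t z w (t y x t')
        = triD m t x y (t z w t') - t (triD m t x y z) w t' \<and>
      \<comment> \<open>P5\<close>
      m (triD m t x y z) w + m (t x y z) w - m (t y x z) w
        = triD m t x y (m z w) - m z (triD m t x y w))"

definition quadratic_pre_LY :: "('k::field_char_0 \<Rightarrow> 'v::ab_group_add \<Rightarrow> 'v)
   \<Rightarrow> ('v \<Rightarrow> 'v \<Rightarrow> 'v) \<Rightarrow> ('v \<Rightarrow> 'v \<Rightarrow> 'v \<Rightarrow> 'v) \<Rightarrow> ('v \<Rightarrow> 'v \<Rightarrow> 'k) \<Rightarrow> bool" where
  "quadratic_pre_LY sc m t \<omega> \<longleftrightarrow> pre_LY sc m t \<and>
    bilin sc (*) \<omega> \<and>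
    (\<forall>x y. \<omega> x y = - \<omega> y x) \<and>
    (\<forall>x. (\<forall>y. \<omega> x y = 0) \<longrightarrow> x = 0) \<and>
    (\<forall>x y z. \<omega> (m x y) z = - \<omega> y (commC m x z)) \<and>
    (\<forall>x y z w. \<omega> (t x y z) w = \<omega> x (triC m t w z y))"

end

theory Submission
  imports Defs
begin

text \<open>Expanding \<open>{x,y,z}\<^sub>D\<close> and moving each term across \<open>\<omega>\<close> with the two invariance
  conditions turns \<open>\<omega>({x,y,z}\<^sub>D, w)\<close> into \<open>\<omega>(z, [[w,x,y]]\<^sub>C - [[w,y,x]]\<^sub>C + J(x,y,w))\<close>,
  where the Jacobiator \<open>J\<close> comes from the two associator terms. The classical identity
  writing \<open>J\<close> as the alternating sum of associators over all permutations collapses the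
  second argument to \<open>-[[x,y,w]]\<^sub>C\<close>. None of the axioms (P1)-(P5) enters: bilinearity
  of \<open>*\<close> and \<open>\<omega>\<close> and the invariance of \<open>\<omega>\<close> suffice.\<close>

lemma bilin_add_left: "bilin s s' f \<Longrightarrow> f (a + b) c = f a c + f b c"
  unfolding bilin_def by (metis linear.axioms(3) module_hom.add)

lemma bilin_diff_left: "bilin s s' f \<Longrightarrow> f (a - b) c = f a c - f b c"
  unfolding bilin_def by (metis linear.axioms(3) module_hom.diff)

lemma bilin_add_right: "bilin s s' f \<Longrightarrow> f c (a + b) = f c a + f c b"
  unfolding bilin_def by (metis linear.axioms(3) module_hom.add)

lemma bilin_diff_right: "bilin s s' f \<Longrightarrow> f c (a - b) = f c a - f c b"
  unfolding bilin_def by (metis linear.axioms(3) module_hom.diff)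

lemma bilin_minus_right: "bilin s s' f \<Longrightarrow> f c (- a) = - f c a"
  unfolding bilin_def by (metis linear.axioms(3) module_hom.neg)

definition jacobiator :: "('v::ab_group_add \<Rightarrow> 'v \<Rightarrow> 'v) \<Rightarrow> 'v \<Rightarrow> 'v \<Rightarrow> 'v \<Rightarrow> 'v" where
  "jacobiator m x y z =
     commC m (commC m x y) z + commC m (commC m y z) x + commC m (commC m z x) y"

lemma jacobiator_eq_alternating_assoc:
  fixes m :: "'v::ab_group_add \<Rightarrow> 'v \<Rightarrow> 'v"
  assumes "\<And>a b c. m a (b - c) = m a b - m a c"
    and "\<And>a b c. m (a - b) c = m a c - m b c"
  shows "jacobiator m x y z = assoc m x y z - assoc m y x z - assoc m x z y
           + assoc m z x y + assoc m y z x - assoc m z y x"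
  unfolding jacobiator_def commC_def assoc_def by (simp add: assms algebra_simps)

lemma triC_alternation:
  fixes m :: "'v::ab_group_add \<Rightarrow> 'v \<Rightarrow> 'v"
  assumes "\<And>a b c. m a (b - c) = m a b - m a c"
    and "\<And>a b c. m (a - b) c = m a c - m b c"
  shows "triC m t w x y - triC m t w y x + jacobiator m x y w = - triC m t x y w"
  unfolding jacobiator_eq_alternating_assoc[OF assms] triC_def triD_def
  by (simp add: algebra_simps)

lemma invariant_form_assoc_antisym:
  assumes \<omega>: "bilin sc (*) \<omega>" and m: "bilin sc sc m"
    and inv: "\<And>a b c. \<omega> (m a b) c = - \<omega> b (commC m a c)"
  shows "\<omega> (assoc m y x z - assoc m x y z) w = \<omega> z (jacobiator m x y w)"
proof -
  have assoc: "\<omega> (assoc m a b c) w = - \<omega> c (commC m (m a b) w + commC m b (commC m a w))"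
    for a b c
    unfolding assoc_def
    by (simp add: bilin_diff_left[OF \<omega>] bilin_add_right[OF \<omega>] bilin_minus_right[OF \<omega>] inv)
  have "jacobiator m x y w = commC m (m x y) w + commC m y (commC m x w)
          - (commC m (m y x) w + commC m x (commC m y w))"
    unfolding jacobiator_def commC_def
    by (simp add: bilin_diff_left[OF m] bilin_diff_right[OF m] algebra_simps)
  then show ?thesis
    by (simp add: bilin_diff_left[OF \<omega>] bilin_diff_right[OF \<omega>] assoc)
qed

theorem lemma4p11:
  fixes sc :: "'k::field_char_0 \<Rightarrow> 'v::ab_group_add \<Rightarrow> 'v"
    and m :: "'v \<Rightarrow> 'v \<Rightarrow> 'v" and t :: "'v \<Rightarrow> 'v \<Rightarrow> 'v \<Rightarrow> 'v"
    and \<omega> :: "'v \<Rightarrow> 'v \<Rightarrow> 'k"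
  assumes "quadratic_pre_LY sc m t \<omega>"
  shows "\<forall>x y z w. \<omega> (triD m t x y z) w = - \<omega> z (triC m t x y w)"
proof (intro allI)
  fix x y z w
  have \<omega>: "bilin sc (*) \<omega>" and m: "bilin sc sc m"
    and inv: "\<And>a b c. \<omega> (m a b) c = - \<omega> b (commC m a c)"
    and tinv: "\<And>a b c d. \<omega> (t a b c) d = \<omega> a (triC m t d c b)"
    using assms unfolding quadratic_pre_LY_def pre_LY_def by blast+
  have "\<omega> (triD m t x y z) w
      = \<omega> (t z y x) w - \<omega> (t z x y) w + \<omega> (assoc m y x z - assoc m x y z) w"
    unfolding triD_def add_diff_eq[symmetric] bilin_add_left[OF \<omega>] bilin_diff_left[OF \<omega>] ..
  also have "\<dots> = \<omega> z (triC m t w x y - triC m t w y x + jacobiator m x y w)"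
    by (simp add: bilin_add_right[OF \<omega>] bilin_diff_right[OF \<omega>] tinv
        invariant_form_assoc_antisym[OF \<omega> m inv])
  also have "\<dots> = - \<omega> z (triC m t x y w)"
    by (simp add: triC_alternation bilin_diff_left[OF m] bilin_diff_right[OF m]
        bilin_minus_right[OF \<omega>])
  finally show "\<omega> (triD m t x y z) w = - \<omega> z (triC m t x y w)" .
qed

end
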